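(* Let $T$ be a p-string of length $n$ and let $1\le i\le j\le n$. If $\mathrm{prev}(T[i..j])$ is represented by $\mathrm{PPH}(T)$, then $\mathrm{prev}(X)$ is represented by $\mathrm{PPH}(T)$ for every substring $X$ of $T[i..j]$.
   Context: Let $\Sigma$ and $\Pi$ be disjoint alphabets. A p-string is a finite string over $\Sigma\cup\Pi$. For a string $S$, $S[i]$ is its $i$-th character, $S[i..j]$ is the substring from position $i$ to $j$ (empty if $j<i$), and $S[i..]=S[i..|S|]$. The previous encoding $\mathrm{prev}(S)$ of a p-string $S$ of length $n$ is the sequence of length $n$ defined by: - $\mathrm{prev}(S)[i]=S[i]$ if $S[i]\in\Sigma$; - $\mathrm{prev}(S)[i]=0$ if $S[i]\in\Pi$ does not occur in $S[1..i-1]$; - $\mathrm{prev}(S)[i]=i-j$ otherwise, where $j<i$ is the largest position with $S[j]=S[i]$. Sequence hash tree. Let $\langle S_1,\ldots,S_k\rangle$ be a sequence of strings with $S_1=\varepsilon$ and with $S_i$ not a prefix of $S_j$ for any $j<i$. Its sequence hash tree is built as follows. Start from a root representing $\varepsilon$. For $i=2,\ldots,k$, insert as a new node the shortest prefix $p_i$ of $S_i$ that is not yet a node. Attach it as a child of the longest prefix $q_i$ of $S_i$ that is already a node, via an edge labeled $S_i[|q_i|+1]$. The parameterized position heap $\mathrm{PPH}(T)$ is the sequence hash tree of $\langle\varepsilon,\mathrm{prev}(T[n..]),\ldots,\mathrm{prev}(T[1..])\rangle$. A sequence $P$ over $\Sigma\cup\{0,\ldots,n-1\}$ is represented by $\mathrm{PPH}(T)$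 if $\mathrm{PPH}(T)$ has a path starting at the root whose edge labels spell out $P$. *)

theory Defs
  imports Main
begin

text \<open>A p-string over disjoint alphabets Sigma ('s) and Pi ('p): characters are
  Inl a (static symbol) or Inr x (parameter symbol). Lists are 0-indexed.\<close>
type_synonym ('s,'p) pstring = "('s + 'p) list"

text \<open>Substring S[i..j] with 1-based positions (empty if j < i).\<close>
definition substr :: "'a list \<Rightarrow> nat \<Rightarrow> nat \<Rightarrow> 'a list" where
  "substr S i j = take (Suc j - i) (drop (i - 1) S)"

definition prev :: "('s,'p) pstring \<Rightarrow> ('s + nat) list" where
  "prev S = map (\<lambda>i. case S ! i of
       Inl a \<Rightarrow> Inl a
     | Inr x \<Rightarrow> (if Inr x \<notin> set (take i S) then Inr 0
                else Inr (i - Max {j. j < i \<and> S ! j = S ! i})))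
     [0..<length S]"

text \<open>Sequence hash tree as (nodes, labelled edges (parent, label, child)).\<close>
definition sht_insert :: "('a list set \<times> ('a list \<times> 'a \<times> 'a list) set) \<Rightarrow> 'a list
     \<Rightarrow> ('a list set \<times> ('a list \<times> 'a \<times> 'a list) set)" where
  "sht_insert NE S =
     (let N = fst NE; E = snd NE;
          p = take (LEAST k. take k S \<notin> N) S;
          q = take (GREATEST k. k \<le> length S \<and> take k S \<in> N) S
      in (insert p N, insert (q, S ! length q, p) E))"

text \<open>Sequence hash tree of \<langle>\<epsilon>, S_2, ..., S_k\<rangle>; the argument is the list [S_2,...,S_k].\<close>
definition sht :: "'a list list \<Rightarrow> ('a list set \<times> ('a list \<times> 'a \<times> 'a list) set)" where
  "sht Ss = fold (\<lambda>S NE. sht_insert NE S) Ss ({[]}, {})"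

definition PPH :: "('s,'p) pstring \<Rightarrow> (('s + nat) list set \<times> (('s + nat) list \<times> ('s + nat) \<times> ('s + nat) list) set)" where
  "PPH T = sht (map (\<lambda>k. prev (substr T k (length T))) (rev [1..<Suc (length T)]))"

inductive tree_path :: "('a list \<times> 'a \<times> 'a list) set \<Rightarrow> 'a list \<Rightarrow> 'a list \<Rightarrow> 'a list \<Rightarrow> bool"
  for E where
  nil: "tree_path E u [] u"
| cons: "(u, c, v) \<in> E \<Longrightarrow> tree_path E v w x \<Longrightarrow> tree_path E u (c # w) x"

definition represented :: "'a list \<Rightarrow> ('a list set \<times> ('a list \<times> 'a \<times> 'a list) set) \<Rightarrow> bool" where
  "represented P H = (\<exists>v. tree_path (snd H) [] P v)"

end

theory Submission
  imports Defs
begin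

(*
  The sequence hash tree of prev(T[n..]), ..., prev(T[1..]) is a trie: its edges are determined
  by its prefix-closed node set, so a sequence is represented iff it is a node. Deleting the first
  symbol of a p-string acts on prev-encodings by a map prev_tail that commutes with truncation and
  sends each inserted sequence to the one inserted just before it. The node set is closed under
  prev_tail: if the nodes inserted for S_k and S_(k+1) have lengths m' and m, then either
  m - 1 <= m', and the image of the new node is a prefix of the node of S_k, or the prefix of
  S_(k+1) of length m' + 1 was a node before S_k was inserted, and so would have been its image,
  the node of S_k. As prev of a factor of X arises from prev X by iterating prev_tail and
  truncating, every factor of a represented factor is represented.
*)

definition prefix_closed :: "'a list set \<Rightarrow> bool" where
  "prefix_closed N \<longleftrightarrow> (\<forall>x\<in>N. \<forall>k. take k x \<in> N)"

definition trie :: "'a list set \<Rightarrow> 'a list set \<times> ('a list \<times> 'a \<times> 'a list) set" where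
  "trie N = (N, {(u, c, u @ [c]) | u c. u @ [c] \<in> N})"

definition sht_node :: "'a list set \<Rightarrow> 'a list \<Rightarrow> 'a list" where
  "sht_node N S = take (LEAST k. take k S \<notin> N) S"

lemma sht_nodeE:
  assumes "[] \<in> N" and "S \<notin> N"
  obtains m where "sht_node N S = take m S" and "0 < m" and "m \<le> length S"
    and "\<And>k. k < m \<Longrightarrow> take k S \<in> N" and "take m S \<notin> N"
proof
  let ?m = "LEAST k. take k S \<notin> N"
  have S: "take (length S) S \<notin> N" using assms(2) by simp
  show "sht_node N S = take ?m S" by (simp add: sht_node_def)
  show m: "take ?m S \<notin> N" using S by (rule LeastI)
  show "?m \<le> length S" using S by (rule Least_le)
  show "\<And>k. k < ?m \<Longrightarrow> take k S \<in> N" using not_less_Least by blast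
  show "0 < ?m" using m assms(1) by (cases ?m) auto
qed

lemma sht_insert_trie:
  assumes "[] \<in> N" and "prefix_closed N" and "S \<notin> N"
  shows "sht_insert (trie N) S = trie (insert (sht_node N S) N)"
proof -
  obtain m where p: "sht_node N S = take m S" and m: "0 < m" "m \<le> length S"
    and below: "\<And>k. k < m \<Longrightarrow> take k S \<in> N" and "take m S \<notin> N"
    using sht_nodeE[OF assms(1,3)] by blast
  have above: "take k S \<notin> N" if "m \<le> k" for k
    using \<open>take m S \<notin> N\<close> \<open>prefix_closed N\<close> that
    unfolding prefix_closed_def by (metis min.absorb1 take_take)
  have "(GREATEST k. k \<le> length S \<and> take k S \<in> N) = m - 1"
  proof (rule Greatest_equality)
    show "m - 1 \<le> length S \<and> take (m - 1) S \<in> N" using m below by simp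
  next
    fix k assume "k \<le> length S \<and> take k S \<in> N"
    then have "\<not> m \<le> k" using above by blast
    then show "k \<le> m - 1" by linarith
  qed
  moreover have "length (take (m - 1) S) = m - 1" using m by simp
  ultimately have "sht_insert (trie N) S
      = (insert (sht_node N S) N, insert (take (m - 1) S, S ! (m - 1), sht_node N S) (snd (trie N)))"
    unfolding sht_insert_def Let_def trie_def fst_conv snd_conv sht_node_def[symmetric] by simp
  moreover have "sht_node N S = take (m - 1) S @ [S ! (m - 1)]"
    using m p by (metis Suc_diff_1 Suc_le_lessD take_Suc_conv_app_nth)
  ultimately show ?thesis by (auto simp: trie_def)
qed

lemma tree_path_trie:
  "tree_path (snd (trie N)) u w v \<Longrightarrow> v = u @ w \<and> (w \<noteq> [] \<longrightarrow> v \<in> N)"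
  by (induction rule: tree_path.induct) (auto simp: trie_def)

lemma tree_path_trieI:
  "prefix_closed N \<Longrightarrow> u @ w \<in> N \<Longrightarrow> tree_path (snd (trie N)) u w (u @ w)"
proof (induction w arbitrary: u)
  case Nil
  show ?case by (simp add: tree_path.nil)
next
  case (Cons c w)
  have "take (Suc (length u)) (u @ c # w) \<in> N"
    using Cons.prems unfolding prefix_closed_def by blast
  then have "(u, c, u @ [c]) \<in> snd (trie N)" by (simp add: trie_def)
  moreover have "tree_path (snd (trie N)) (u @ [c]) w (u @ c # w)"
    using Cons.IH[of "u @ [c]"] Cons.prems by simp
  ultimately show ?case by (rule tree_path.cons)
qed

lemma represented_trie:
  assumes "[] \<in> N" and "prefix_closed N"
  shows "represented P (trie N) \<longleftrightarrow> P \<in> N"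
  using assms tree_path_trie[of N "[]" P] tree_path_trieI[of N "[]" P]
  unfolding represented_def by (cases "P = []") auto

lemma sht_node_prefix_closed:
  assumes "[] \<in> N" and "prefix_closed N" and "S \<notin> N"
  shows "prefix_closed (insert (sht_node N S) N)"
proof -
  obtain m where p: "sht_node N S = take m S" and below: "\<And>k. k < m \<Longrightarrow> take k S \<in> N"
    using sht_nodeE[OF assms(1,3)] by blast
  have "take k (take m S) \<in> insert (take m S) N" for k
    using below by (cases "k < m") (auto simp: min_def)
  then show ?thesis using assms(2) p unfolding prefix_closed_def by auto
qed

lemma sht_node_length_le:
  assumes "[] \<in> N" and "S \<notin> N" and "\<forall>x\<in>N. length x \<le> n"
  shows "length (sht_node N S) \<le> Suc n"
proof -
  obtain m where "sht_node N S = take m S" "0 < m" "m \<le> length S" "take (m - 1) S \<in> N"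
    using sht_nodeE[OF assms(1,2)] by (metis diff_less zero_less_one)
  then show ?thesis using assms(3) by fastforce
qed

lemma sht_snoc: "sht (Ss @ [S]) = sht_insert (sht Ss) S"
  by (simp add: sht_def)

lemma sht_trie:
  assumes "\<forall>k<length Ss. k < length (Ss ! k)"
  shows "\<exists>N. sht Ss = trie N \<and> [] \<in> N \<and> prefix_closed N \<and> (\<forall>x\<in>N. length x \<le> length Ss)"
  using assms
proof (induction Ss rule: rev_induct)
  case Nil
  have "sht [] = trie {[]}" by (simp add: sht_def trie_def)
  then show ?case by (auto simp: prefix_closed_def)
next
  case (snoc S Ss)
  have "\<forall>k<length Ss. k < length (Ss ! k)"
    using snoc.prems by (metis length_append_singleton less_SucI nth_append_left)
  then obtain N where N: "sht Ss = trie N" "[] \<in> N" "prefix_closed N" "\<forall>x\<in>N. length x \<le> length Ss"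
    using snoc.IH by blast
  have "length Ss < length S" using snoc.prems[rule_format, of "length Ss"] by simp
  then have "S \<notin> N" using N(4) by fastforce
  then have "sht (Ss @ [S]) = trie (insert (sht_node N S) N)"
    and "prefix_closed (insert (sht_node N S) N)"
    and "length (sht_node N S) \<le> Suc (length Ss)"
    using N sht_insert_trie sht_node_prefix_closed sht_node_length_le by (simp_all add: sht_snoc)
  then show ?case using N by (intro exI[of _ "insert (sht_node N S) N"]) auto
qed

lemma sht_node_shift:
  assumes f_take: "\<And>k x. f (take k x) = take (k - 1) (f x)"
    and N: "[] \<in> N" "prefix_closed N" "\<forall>x\<in>N. f x \<in> N"
    and z: "z \<notin> N" and N': "N' = insert (sht_node N z) N"
    and y: "y \<notin> N'" "f y = z"
  shows "f (sht_node N' y) \<in> N'"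
proof -
  obtain m' where p': "sht_node N z = take m' z" and "m' \<le> length z"
    and below': "\<And>k. k < m' \<Longrightarrow> take k z \<in> N" and "take m' z \<notin> N"
    using sht_nodeE[OF N(1) z] by blast
  obtain m where p: "sht_node N' y = take m y" and "m \<le> length y"
    and below: "\<And>k. k < m \<Longrightarrow> take k y \<in> N'"
    using sht_nodeE[of N' y] N' N(1) y(1) by blast
  have "take (m - 1) z \<in> N'"
  proof (cases "m - 1 \<le> m'")
    case True
    then show ?thesis using N' p' below' by (cases "m - 1 = m'") auto
  next
    case False
    \<comment> \<open>then the node of \<open>z\<close> is the image of a node that existed before \<open>z\<close> was inserted\<close>
    then have "take (Suc m') y \<in> N'" using below by simp
    moreover have "length (take (Suc m') y) = Suc m'" using False \<open>m \<le> length y\<close> by simp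
    moreover have "length (sht_node N z) = m'" using p' \<open>m' \<le> length z\<close> by simp
    ultimately have "take (Suc m') y \<in> N" using N' by (metis Suc_n_not_n insertE)
    then have "take m' z \<in> N" using N(3) f_take[of "Suc m'" y] y(2) by force
    then show ?thesis using \<open>take m' z \<notin> N\<close> by contradiction
  qed
  then show ?thesis using p f_take[of m y] y(2) by simp
qed

lemma sht_take_Suc: "k < length Ss \<Longrightarrow> sht (take (Suc k) Ss) = sht_insert (sht (take k Ss)) (Ss ! k)"
  by (simp add: take_Suc_conv_app_nth sht_snoc)

definition sht_nodes :: "'a list list \<Rightarrow> nat \<Rightarrow> 'a list set" where
  "sht_nodes Ss k = fst (sht (take k Ss))"

lemma sht_take_trie:
  assumes "\<forall>k<length Ss. k < length (Ss ! k)"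
  shows "sht (take k Ss) = trie (sht_nodes Ss k)" and "[] \<in> sht_nodes Ss k"
    and "prefix_closed (sht_nodes Ss k)" and "k < length Ss \<Longrightarrow> Ss ! k \<notin> sht_nodes Ss k"
proof -
  have "\<forall>i<length (take k Ss). i < length (take k Ss ! i)" using assms by simp
  then obtain N where N: "sht (take k Ss) = trie N" "[] \<in> N" "prefix_closed N"
    "\<forall>x\<in>N. length x \<le> length (take k Ss)"
    using sht_trie by blast
  then have "sht_nodes Ss k = N" by (simp add: sht_nodes_def trie_def)
  then show "sht (take k Ss) = trie (sht_nodes Ss k)" "[] \<in> sht_nodes Ss k"
    "prefix_closed (sht_nodes Ss k)"
    using N by simp_all
  show "Ss ! k \<notin> sht_nodes Ss k" if "k < length Ss"
    using N(4) assms that \<open>sht_nodes Ss k = N\<close> by fastforce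
qed

lemma sht_nodes_0: "sht_nodes Ss 0 = {[]}"
  by (simp add: sht_nodes_def sht_def)

lemma sht_nodes_Suc:
  assumes "\<forall>k<length Ss. k < length (Ss ! k)" and "k < length Ss"
  shows "sht_nodes Ss (Suc k) = insert (sht_node (sht_nodes Ss k) (Ss ! k)) (sht_nodes Ss k)"
proof -
  note trie = sht_take_trie[OF assms(1)]
  have "sht (take (Suc k) Ss) = sht_insert (trie (sht_nodes Ss k)) (Ss ! k)"
    by (simp only: sht_take_Suc[OF assms(2)] trie(1)[of k])
  also have "\<dots> = trie (insert (sht_node (sht_nodes Ss k) (Ss ! k)) (sht_nodes Ss k))"
    using sht_insert_trie[OF trie(2,3) trie(4)[OF assms(2)]] .
  finally show ?thesis by (simp add: sht_nodes_def trie_def)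
qed

lemma sht_node_root_shift:
  assumes f_take: "\<And>k x. f (take k x) = take (k - 1) (f x)" and "y \<noteq> []"
  shows "f (sht_node {[]} y) = []"
proof -
  obtain m where m: "sht_node {[]} y = take m y" "0 < m" "m \<le> length y"
    and below: "\<And>k. k < m \<Longrightarrow> take k y \<in> {[]}"
    using sht_nodeE[of "{[]}" y] assms(2) by blast
  have "take (m - 1) y = []" using below[of "m - 1"] m(2) by simp
  then have "m - 1 = 0" using m(2,3) assms(2) by simp
  then show ?thesis using m(1) f_take[of m] by simp
qed

lemma sht_nodes_shift_closed:
  assumes long: "\<forall>k<length Ss. k < length (Ss ! k)"
    and f_take: "\<And>k x. f (take k x) = take (k - 1) (f x)"
    and f_Ss: "\<And>k. Suc k < length Ss \<Longrightarrow> f (Ss ! Suc k) = Ss ! k"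
    and "k \<le> length Ss"
  shows "\<forall>x\<in>sht_nodes Ss k. f x \<in> sht_nodes Ss k"
  using \<open>k \<le> length Ss\<close>
proof (induction k rule: less_induct)
  case (less k)
  note trie = sht_take_trie[OF long] and nodes_Suc = sht_nodes_Suc[OF long]
  have f_Nil: "f [] = []" using f_take[of 0] by simp
  consider "k = 0" | "k = Suc 0" | i where "k = Suc (Suc i)"
    by (metis not0_implies_Suc)
  then show ?case
  proof cases
    case 1
    then show ?thesis using f_Nil by (simp add: sht_nodes_0)
  next
    case 2
    then have "0 < length Ss" using less.prems by linarith
    then have "Ss ! 0 \<noteq> []" using trie(4)[of 0] by (simp add: sht_nodes_0)
    then show ?thesis
      using 2 nodes_Suc[OF \<open>0 < length Ss\<close>] f_Nil sht_node_root_shift[OF f_take]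
      by (simp add: sht_nodes_0)
  next
    case 3
    then have i: "i < length Ss" "Suc i < length Ss" using less.prems by simp_all
    have "\<forall>x\<in>sht_nodes Ss i. f x \<in> sht_nodes Ss i" using less 3 by simp
    from sht_node_shift[OF f_take trie(2,3) this trie(4)[OF i(1)] nodes_Suc[OF i(1)]
        trie(4)[OF i(2)] f_Ss[OF i(2)]]
    have "f (sht_node (sht_nodes Ss (Suc i)) (Ss ! Suc i)) \<in> sht_nodes Ss (Suc i)" .
    moreover have "\<forall>x\<in>sht_nodes Ss (Suc i). f x \<in> sht_nodes Ss (Suc i)" using less 3 by simp
    ultimately show ?thesis using 3 nodes_Suc[OF i(2)] by auto
  qed
qed

lemma sht_shift_closed:
  assumes "\<forall>k<length Ss. k < length (Ss ! k)"
    and "\<And>k x. f (take k x) = take (k - 1) (f x)"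
    and "\<And>k. Suc k < length Ss \<Longrightarrow> f (Ss ! Suc k) = Ss ! k"
  shows "\<exists>N. sht Ss = trie N \<and> [] \<in> N \<and> prefix_closed N \<and> (\<forall>x\<in>N. f x \<in> N)"
  using sht_take_trie[OF assms(1), of "length Ss"] sht_nodes_shift_closed[OF assms, of "length Ss"]
  by auto

definition last_dist :: "(nat \<Rightarrow> bool) \<Rightarrow> nat \<Rightarrow> nat" where
  "last_dist P i = (if \<exists>j<i. P j then i - Max {j. j < i \<and> P j} else 0)"

lemma last_dist_cong: "(\<And>j. j < i \<Longrightarrow> P j = Q j) \<Longrightarrow> last_dist P i = last_dist Q i"
proof -
  assume "\<And>j. j < i \<Longrightarrow> P j = Q j"
  then have "(\<exists>j<i. P j) = (\<exists>j<i. Q j)" and "{j. j < i \<and> P j} = {j. j < i \<and> Q j}" by auto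
  then show ?thesis by (auto simp: last_dist_def)
qed

lemma last_dist_Suc:
  "last_dist (\<lambda>j. P (Suc j)) i = (if last_dist P (Suc i) = Suc i then 0 else last_dist P (Suc i))"
proof (cases "\<exists>j<i. P (Suc j)")
  case True
  define B where "B = {j. j < i \<and> P (Suc j)}"
  have "finite B" "B \<noteq> {}" using True by (auto simp: B_def)
  then have "Max B \<in> B" by (rule Max_in)
  have "Max {j. j < Suc i \<and> P j} = Suc (Max B)"
  proof (rule Max_eqI)
    show "Suc (Max B) \<in> {j. j < Suc i \<and> P j}" using \<open>Max B \<in> B\<close> by (simp add: B_def)
    show "j \<le> Suc (Max B)" if "j \<in> {j. j < Suc i \<and> P j}" for j
      using that Max_ge[OF \<open>finite B\<close>, of "j - 1"] by (cases j) (auto simp: B_def)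
  qed simp
  then show ?thesis using True \<open>Max B \<in> B\<close> by (auto simp: last_dist_def B_def)
next
  case False
  then have "{j. j < Suc i \<and> P j} \<subseteq> {0}" by (auto simp: less_Suc_eq_0_disj)
  then show ?thesis using False by (auto simp: last_dist_def subset_singleton_iff)
qed

(* A pointer d = i + 1 at position i + 1 points to the deleted first symbol. *)
definition prev_tail :: "('s + nat) list \<Rightarrow> ('s + nat) list" where
  "prev_tail x = map (\<lambda>i. case x ! Suc i of Inl a \<Rightarrow> Inl a | Inr d \<Rightarrow> Inr (if d = Suc i then 0 else d))
     [0..<length x - 1]"

lemma length_prev_tail [simp]: "length (prev_tail x) = length x - 1"
  by (simp add: prev_tail_def)

lemma nth_prev_tail: "i < length x - 1 \<Longrightarrow>
  prev_tail x ! i = (case x ! Suc i of Inl a \<Rightarrow> Inl a | Inr d \<Rightarrow> Inr (if d = Suc i then 0 else d))"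
  by (simp add: prev_tail_def split: sum.split)

lemma prev_tail_take: "prev_tail (take k x) = take (k - 1) (prev_tail x)"
proof (rule nth_equalityI)
  fix i assume "i < length (prev_tail (take k x))"
  then show "prev_tail (take k x) ! i = take (k - 1) (prev_tail x) ! i" by (simp add: nth_prev_tail)
qed (simp add: min_def)

lemma length_prev [simp]: "length (prev S) = length S"
  by (simp add: prev_def)

lemma nth_prev: "i < length S \<Longrightarrow>
  prev S ! i = (case S ! i of Inl a \<Rightarrow> Inl a | Inr x \<Rightarrow> Inr (last_dist (\<lambda>j. S ! j = S ! i) i))"
proof -
  assume "i < length S"
  then have "Inr x \<in> set (take i S) \<longleftrightarrow> (\<exists>j<i. S ! j = Inr x)" for x
    by (auto simp: in_set_conv_nth)
  then show ?thesis using \<open>i < length S\<close> by (auto simp: prev_def last_dist_def split: sum.split)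
qed

lemma prev_take: "prev (take k S) = take k (prev S)"
proof (rule nth_equalityI)
  fix i assume "i < length (prev (take k S))"
  then have "i < k" "i < length S" by auto
  then have ith: "take k S ! i = S ! i"
    and dist: "last_dist (\<lambda>j. take k S ! j = S ! i) i = last_dist (\<lambda>j. S ! j = S ! i) i"
    by (auto intro: last_dist_cong)
  have "prev (take k S) ! i
      = (case take k S ! i of Inl a \<Rightarrow> Inl a | Inr x \<Rightarrow> Inr (last_dist (\<lambda>j. take k S ! j = take k S ! i) i))"
    using \<open>i < k\<close> \<open>i < length S\<close> by (simp add: nth_prev del: nth_take)
  then show "prev (take k S) ! i = take k (prev S) ! i"
    using \<open>i < k\<close> \<open>i < length S\<close> by (simp only: ith dist nth_take nth_prev)
qed simp

lemma prev_tl: "prev (tl S) = prev_tail (prev S)"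
proof (rule nth_equalityI)
  fix i assume "i < length (prev (tl S))"
  then obtain c S' where S: "S = c # S'" and "i < length S'" by (cases S) auto
  moreover have "last_dist (\<lambda>j. S' ! j = S' ! i) i
      = (let d = last_dist (\<lambda>j. S ! j = S' ! i) (Suc i) in if d = Suc i then 0 else d)"
    using last_dist_Suc[of "\<lambda>j. S ! j = S' ! i" i] S by (simp add: Let_def)
  ultimately show "prev (tl S) ! i = prev_tail (prev S) ! i"
    by (cases "S' ! i") (simp_all add: nth_prev nth_prev_tail Let_def)
qed simp

lemma prev_drop: "prev (drop k S) = (prev_tail ^^ k) (prev S)"
proof (induction k arbitrary: S)
  case (Suc k)
  then show ?case by (simp add: drop_Suc prev_tl funpow_Suc_right del: funpow.simps)
qed simp

lemma PPH_eq_sht_suffixes: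
  "PPH T = sht (map (\<lambda>k. prev (drop (length T - Suc k) T)) [0..<length T])"
proof -
  have "map (\<lambda>k. prev (substr T k (length T))) (rev [1..<Suc (length T)])
      = map (\<lambda>k. prev (drop (length T - Suc k) T)) [0..<length T]"
    by (rule nth_equalityI) (simp_all add: rev_nth substr_def del: upt_Suc)
  then show ?thesis by (simp add: PPH_def)
qed

lemma PPH_trie:
  "\<exists>N. PPH T = trie N \<and> [] \<in> N \<and> prefix_closed N \<and> (\<forall>x\<in>N. prev_tail x \<in> N)"
proof -
  let ?Ss = "map (\<lambda>k. prev (drop (length T - Suc k) T)) [0..<length T]"
  have long: "\<forall>k<length ?Ss. k < length (?Ss ! k)" by simp
  have shift: "prev_tail (?Ss ! Suc k) = ?Ss ! k" if "Suc k < length ?Ss" for k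
  proof -
    have "Suc (length T - Suc (Suc k)) = length T - Suc k" using that by simp
    then have "tl (drop (length T - Suc (Suc k)) T) = drop (length T - Suc k) T"
      by (metis drop_Suc tl_drop)
    then show ?thesis using that by (simp add: prev_tl[symmetric])
  qed
  show ?thesis
    unfolding PPH_eq_sht_suffixes by (rule sht_shift_closed[OF long prev_tail_take shift])
qed

lemma prev_sublist_mem:
  assumes "prefix_closed N" and "\<forall>x\<in>N. prev_tail x \<in> N" and "prev S \<in> N" and "S = u @ X @ v"
  shows "prev X \<in> N"
proof -
  have "prev X = take (length X) ((prev_tail ^^ length u) (prev S))"
    using assms(4) by (metis append_eq_conv_conj prev_drop prev_take)
  moreover have "(prev_tail ^^ k) (prev S) \<in> N" for k
    using assms(2,3) by (induction k) auto
  ultimately show ?thesis using assms(1) unfolding prefix_closed_def by simp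
qed

theorem lemma2:
  fixes T :: "('s,'p) pstring" and i j :: nat
  assumes "1 \<le> i" and "i \<le> j" and "j \<le> length T"
    and "represented (prev (substr T i j)) (PPH T)"
  shows "\<forall>X. (\<exists>u v. substr T i j = u @ X @ v) \<longrightarrow> represented (prev X) (PPH T)"
proof (intro allI impI)
  fix X assume "\<exists>u v. substr T i j = u @ X @ v"
  then obtain u v where uv: "substr T i j = u @ X @ v" by blast
  obtain N where N: "PPH T = trie N" "[] \<in> N" "prefix_closed N" "\<forall>x\<in>N. prev_tail x \<in> N"
    using PPH_trie by blast
  have "prev (substr T i j) \<in> N" using assms(4) N represented_trie by metis
  then have "prev X \<in> N" using prev_sublist_mem[OF N(3,4) _ uv] by blast
  then show "represented (prev X) (PPH T)" using N represented_trie by metis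
qed

end
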